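(* Let $R:\widehat{\mathbb C}\to\widehat{\mathbb C}$ be a rational function of degree at least $2$ whose Julia set $J(R)$ is connected. If $A\subset J(R)$ is non-empty and $T$-closed in $J(R)$, then $R^{-1}(A)$ (which is contained in $J(R)$) is also $T$-closed in $J(R)$.
   Context: $\widehat{\mathbb C}$ is the Riemann sphere; the Julia set $J(R)$ is the complement of the Fatou set (the domain of normality of the iterates of $R$); it is compact, non-empty, and completely invariant. For a continuum $X$ and a non-empty set $A\subset X$, $T(A)$ is the set of $x\in X$ such that every subcontinuum of $X\setminus A$ containing $x$ has empty interior relative to $X$; $A$ is $T$-closed if $T(A)=A$. Here $X=J(R)$. *)

theory Defs
  imports "HOL-Analysis.Analysis" "HOL-Computational_Algebra.Polynomial"
begin

text \<open>The Riemann sphere is modelled as the unit sphere in complex x real (= R^3),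
  with the Euclidean (chordal) metric; infinity is the north pole (0,1).
  Points of the extended plane are represented as complex option (None = infinity).\<close>

definition riemann_sphere :: "(complex \<times> real) set" where
  "riemann_sphere = sphere 0 1"

definition to_sph :: "complex option \<Rightarrow> complex \<times> real" where
  "to_sph z = (case z of None \<Rightarrow> (0, 1)
     | Some w \<Rightarrow> (2 * w / complex_of_real (1 + (cmod w)\<^sup>2),
                  ((cmod w)\<^sup>2 - 1) / ((cmod w)\<^sup>2 + 1)))"

definition from_sph :: "complex \<times> real \<Rightarrow> complex option" where
  "from_sph x = (if snd x = 1 then None
                 else Some (fst x / complex_of_real (1 - snd x)))"

definition is_rational_fn :: "complex poly \<Rightarrow> complex poly \<Rightarrow> bool" where
  "is_rational_fn p q \<longleftrightarrow> q \<noteq> 0 \<and> coprime p q"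

definition rat_degree :: "complex poly \<Rightarrow> complex poly \<Rightarrow> nat" where
  "rat_degree p q = max (degree p) (degree q)"

definition rat_eval :: "complex poly \<Rightarrow> complex poly \<Rightarrow> complex option \<Rightarrow> complex option" where
  "rat_eval p q z = (case z of
      None \<Rightarrow> (if degree p > degree q then None
               else if degree p = degree q then Some (lead_coeff p / lead_coeff q)
               else Some 0)
    | Some w \<Rightarrow> (if poly q w = 0 then None else Some (poly p w / poly q w)))"

definition rat_sph :: "complex poly \<Rightarrow> complex poly \<Rightarrow> complex \<times> real \<Rightarrow> complex \<times> real" where
  "rat_sph p q x = to_sph (rat_eval p q (from_sph x))"

definition normal_fam_sph ::
  "((complex \<times> real) \<Rightarrow> (complex \<times> real)) set \<Rightarrow> (complex \<times> real) set \<Rightarrow> bool" where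
  "normal_fam_sph F U \<longleftrightarrow>
     (\<forall>f::nat \<Rightarrow> (complex \<times> real \<Rightarrow> complex \<times> real). (\<forall>k. f k \<in> F) \<longrightarrow>
        (\<exists>(r::nat \<Rightarrow> nat) g. strict_mono r \<and>
           (\<forall>K. compact K \<and> K \<subseteq> U \<longrightarrow> uniform_limit K (\<lambda>k. f (r k)) g sequentially)))"

definition fatou_set :: "complex poly \<Rightarrow> complex poly \<Rightarrow> (complex \<times> real) set" where
  "fatou_set p q = {x \<in> riemann_sphere. \<exists>U. openin (top_of_set riemann_sphere) U \<and> x \<in> U \<and>
       normal_fam_sph (range (\<lambda>n. (rat_sph p q ^^ n))) U}"

definition julia_set :: "complex poly \<Rightarrow> complex poly \<Rightarrow> (complex \<times> real) set" where
  "julia_set p q = riemann_sphere - fatou_set p q"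

definition T_fun :: "'a::topological_space set \<Rightarrow> 'a set \<Rightarrow> 'a set" where
  "T_fun X A = {x \<in> X. \<forall>C. C \<subseteq> X - A \<and> x \<in> C \<and> compact C \<and> connected C \<longrightarrow>
                      (top_of_set X) interior_of C = {}}"

definition T_closed :: "'a::topological_space set \<Rightarrow> 'a set \<Rightarrow> bool" where
  "T_closed X A \<longleftrightarrow> T_fun X A = A"

end

theory Submission
  imports Defs "HOL-Complex_Analysis.Conformal_Mappings"
begin

text \<open>
  Let \<open>R\<close> be a rational map of degree \<open>d \<ge> 1\<close> acting on the Riemann sphere \<open>S\<close>. Then \<open>R\<close> is
  continuous, open and finite-to-one, and its Julia set \<open>J\<close> is completely invariant
  (\<open>x \<in> J \<longleftrightarrow> R x \<in> J\<close>), because the Fatou set of every continuous open self-map is.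
  The theorem is then an instance of a purely topological fact: given \<open>x \<in> J\<close> outside
  \<open>B = R\<inverse>(A)\<close>, the point \<open>R x\<close> is not in \<open>A = T(A)\<close>, so some continuum \<open>C \<subseteq> J - A\<close>
  through \<open>R x\<close> has nonempty interior in \<open>J\<close>. The preimage of \<open>C\<close> has finitely many components,
  each mapped onto \<open>C\<close>; hence the component through \<open>x\<close> is open in the preimage and is a
  continuum in \<open>J - B\<close> with nonempty interior in \<open>J\<close>, so \<open>x \<notin> T(B)\<close>.
\<close>

section \<open>Preimages of \<open>T\<close>-closed sets under open finite-to-one maps\<close>

lemma compact_preimage:
  fixes R :: "'a::metric_space \<Rightarrow> 'b::metric_space"
  assumes "compact S" and "continuous_on S R" and "compact C"
  shows "compact {z \<in> S. R z \<in> C}"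
proof -
  have "closed (S \<inter> R -` C)"
    using continuous_closed_preimage[OF assms(2) compact_imp_closed[OF assms(1)] compact_imp_closed[OF assms(3)]] .
  then have "compact (S \<inter> (S \<inter> R -` C))" by (rule compact_Int_closed[OF assms(1)])
  moreover have "S \<inter> (S \<inter> R -` C) = {z \<in> S. R z \<in> C}" by auto
  ultimately show ?thesis by simp
qed

lemma image_clopen_in_preimage:
  fixes R :: "'a::metric_space \<Rightarrow> 'a"
  assumes S: "compact S" and contR: "continuous_on S R"
    and openR: "\<And>U. openin (top_of_set S) U \<Longrightarrow> openin (top_of_set S) (R ` U)"
    and C: "C \<subseteq> S" "compact C"
    and U: "openin (top_of_set {z \<in> S. R z \<in> C}) U" "closedin (top_of_set {z \<in> S. R z \<in> C}) U"
  shows "openin (top_of_set C) (R ` U)" and "closedin (top_of_set C) (R ` U)"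
proof -
  obtain Op where Op: "open Op" "U = {z \<in> S. R z \<in> C} \<inter> Op" using U(1) by (auto simp: openin_open)
  have img: "R ` U = R ` (S \<inter> Op) \<inter> C" using Op(2) by auto
  obtain G where G: "open G" "R ` (S \<inter> Op) = S \<inter> G"
    using openR[of "S \<inter> Op"] Op(1) by (auto simp: openin_open)
  show "openin (top_of_set C) (R ` U)"
    using G C(1) unfolding img by (auto simp: openin_open)
  have "compact U"
    using U(2) compact_preimage[OF S contR C(2)] closedin_compact by blast
  then have "compact (R ` U)"
    using contR Op(2) by (intro compact_continuous_image) (auto intro: continuous_on_subset)
  then show "closedin (top_of_set C) (R ` U)"
    using img by (intro closed_subset) (auto intro: compact_imp_closed)
qed

text \<open>Consequently every connected component \<open>E\<close> of the preimage of a continuum \<open>C\<close> is mapped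
  onto \<open>C\<close>: otherwise \<open>E\<close> could be separated from a fibre by a clopen set, whose image would be a
  proper nonempty clopen subset of \<open>C\<close>.\<close>

lemma component_of_preimage_onto:
  fixes R :: "'a::metric_space \<Rightarrow> 'a"
  assumes S: "compact S" and contR: "continuous_on S R"
    and openR: "\<And>U. openin (top_of_set S) U \<Longrightarrow> openin (top_of_set S) (R ` U)"
    and C: "C \<subseteq> S" "compact C" "connected C"
    and E: "E \<in> connected_components_of (top_of_set {z \<in> S. R z \<in> C})"
  shows "R ` E = C"
proof -
  define K where "K = {z \<in> S. R z \<in> C}"
  let ?X = "top_of_set K"
  have Kc: "compact K" unfolding K_def using S contR C(2) by (rule compact_preimage)
  have EK: "E \<subseteq> K" using E connected_components_of_subset unfolding K_def by fastforce
  have "y \<in> R ` E" if y: "y \<in> C" for y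
  proof (rule ccontr)
    assume y_notin: "y \<notin> R ` E"
    define F where "F = {z \<in> K. R z = y}"
    have "E \<in> quasi_components_of ?X"
      using quasi_eq_connected_components_of[of ?X] Kc E unfolding K_def
      by (simp add: compact_space_subtopology Hausdorff_space_subtopology)
    moreover have "compactin ?X F"
    proof -
      have "continuous_on K R" using contR by (auto simp: K_def intro: continuous_on_subset)
      then have "closed F"
        unfolding F_def using Kc by (intro continuous_closed_preimage_constant compact_imp_closed)
      then have "compact (K \<inter> F)" by (rule compact_Int_closed[OF Kc])
      moreover have "F \<subseteq> K" by (auto simp: F_def)
      ultimately show ?thesis by (simp add: compactin_subtopology Int_absorb1)
    qed
    moreover have "disjnt E F" using y_notin by (auto simp: disjnt_def F_def)
    ultimately have "separated_between ?X E F"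
      using separated_between_quasi_component_compact by blast
    then obtain U V where UV: "openin ?X U" "openin ?X V" "U \<union> V = K" "disjnt U V" "E \<subseteq> U" "F \<subseteq> V"
      unfolding separated_between_def by auto
    have "U = K - V" using UV(3,4) by (auto simp: disjnt_def)
    then have "closedin ?X U" using closedin_diff[OF closedin_topspace[of ?X] UV(2)] by simp
    then have "openin (top_of_set C) (R ` U)" "closedin (top_of_set C) (R ` U)"
      using image_clopen_in_preimage[OF S contR openR C(1,2)] UV(1) unfolding K_def by blast+
    moreover have "R ` U \<noteq> {}"
      using UV(5) E nonempty_connected_components_of by blast
    ultimately have "R ` U = C" using C(3) unfolding connected_clopen by blast
    then obtain z where "z \<in> U" "R z = y" using y by (metis imageE)
    then have "z \<in> F" using UV(3) by (auto simp: F_def)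
    then show False using UV(4,6) \<open>z \<in> U\<close> by (auto simp: disjnt_def)
  qed
  then show ?thesis using EK by (auto simp: K_def)
qed

text \<open>If moreover one fibre over a point of \<open>C\<close> is finite, the preimage of \<open>C\<close> has only
  finitely many components, since each of them contains a point of that fibre.\<close>

lemma finite_components_of_preimage:
  fixes R :: "'a::metric_space \<Rightarrow> 'a"
  assumes S: "compact S" and contR: "continuous_on S R"
    and openR: "\<And>U. openin (top_of_set S) U \<Longrightarrow> openin (top_of_set S) (R ` U)"
    and fin: "finite {z \<in> S. R z = y}"
    and C: "C \<subseteq> S" "compact C" "connected C" and y: "y \<in> C"
  shows "finite (connected_components_of (top_of_set {z \<in> S. R z \<in> C}))"
proof -
  let ?\<E> = "connected_components_of (top_of_set {z \<in> S. R z \<in> C})"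
  define pick where "pick E = (SOME z. z \<in> E \<and> R z = y)" for E
  have pick: "pick E \<in> E \<and> R (pick E) = y" if "E \<in> ?\<E>" for E
  proof -
    have "y \<in> R ` E" using component_of_preimage_onto[OF S contR openR C that] y by simp
    then have "\<exists>z. z \<in> E \<and> R z = y" by auto
    then show ?thesis unfolding pick_def by (rule someI_ex)
  qed
  have "inj_on pick ?\<E>"
  proof (rule inj_onI)
    fix E1 E2 assume E: "E1 \<in> ?\<E>" "E2 \<in> ?\<E>" "pick E1 = pick E2"
    then have "\<not> disjnt E1 E2" using pick[OF E(1)] pick[OF E(2)] by (auto simp: disjnt_def)
    then show "E1 = E2" using connected_components_of_disjoint[OF E(1,2)] by blast
  qed
  moreover have "pick ` ?\<E> \<subseteq> {z \<in> S. R z = y}"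
  proof
    fix z assume "z \<in> pick ` ?\<E>"
    then obtain E where E: "E \<in> ?\<E>" "z = pick E" by blast
    then show "z \<in> {z \<in> S. R z = y}"
      using pick[OF E(1)] connected_components_of_subset[OF E(1)] by auto
  qed
  then have "finite (pick ` ?\<E>)" using fin by (rule finite_subset)
  ultimately show ?thesis using finite_imageD by blast
qed

lemma preimage_interior_point:
  fixes R :: "'a::metric_space \<Rightarrow> 'a"
  assumes contR: "continuous_on S R"
    and JS: "J \<subseteq> S" and inv: "\<And>z. z \<in> S \<Longrightarrow> z \<in> J \<longleftrightarrow> R z \<in> J"
    and D: "openin (top_of_set {z \<in> S. R z \<in> C}) D" and z: "z \<in> D"
    and Rz: "R z \<in> (top_of_set J) interior_of C"
  shows "z \<in> (top_of_set J) interior_of D"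
proof -
  obtain W where W: "open W" "R z \<in> W" "J \<inter> W \<subseteq> C"
    using Rz by (auto simp: interior_of_def openin_open)
  obtain Op where Op: "open Op" "D = {z \<in> S. R z \<in> C} \<inter> Op" using D by (auto simp: openin_open)
  obtain W' where W': "open W'" "S \<inter> R -` W = S \<inter> W'"
    using continuous_openin_preimage_gen[OF contR W(1)] by (auto simp: openin_open)
  define N where "N = J \<inter> (Op \<inter> W')"
  have "openin (top_of_set J) N" unfolding N_def using Op(1) W'(1) by (simp add: openin_open_Int open_Int)
  moreover have "N \<subseteq> D"
  proof
    fix u assume u: "u \<in> N"
    then have "u \<in> S" using JS by (auto simp: N_def)
    then have "R u \<in> J" using inv[of u] u by (simp add: N_def)
    moreover have "R u \<in> W" using W'(2) u \<open>u \<in> S\<close> by (auto simp: N_def)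
    ultimately show "u \<in> D" using W(3) u \<open>u \<in> S\<close> Op(2) by (auto simp: N_def)
  qed
  moreover have "z \<in> N"
  proof -
    have "R z \<in> J" using Rz interior_of_subset_topspace[of "top_of_set J" C] by auto
    moreover have "z \<in> S" using z Op(2) by blast
    ultimately have "z \<in> J" using inv[of z] by simp
    moreover have "z \<in> W'" using \<open>z \<in> S\<close> W(2) W'(2) by blast
    ultimately show ?thesis using z Op(2) by (simp add: N_def)
  qed
  ultimately show ?thesis using interior_of_maximal by blast
qed

text \<open>The key step: if \<open>C \<subseteq> J\<close> is a continuum with nonempty interior in the completely
  invariant set \<open>J\<close>, then the component of its preimage through \<open>x\<close> is a continuum with nonempty
  interior in \<open>J\<close>: it is open in the preimage (there are finitely many components) and contains a
  preimage of an interior point of \<open>C\<close>.\<close>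

lemma component_of_preimage_interior:
  fixes R :: "'a::metric_space \<Rightarrow> 'a"
  assumes S: "compact S" and contR: "continuous_on S R"
    and openR: "\<And>U. openin (top_of_set S) U \<Longrightarrow> openin (top_of_set S) (R ` U)"
    and fin: "\<And>y. finite {z \<in> S. R z = y}"
    and JS: "J \<subseteq> S" and inv: "\<And>z. z \<in> S \<Longrightarrow> z \<in> J \<longleftrightarrow> R z \<in> J"
    and C: "C \<subseteq> J" "compact C" "connected C" and int: "(top_of_set J) interior_of C \<noteq> {}"
    and x: "x \<in> S" "R x \<in> C"
  obtains D where "x \<in> D" "D \<subseteq> {z \<in> S. R z \<in> C}" "compact D" "connected D"
    "(top_of_set J) interior_of D \<noteq> {}"
proof -
  define K where "K = {z \<in> S. R z \<in> C}"
  let ?X = "top_of_set K"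
  have CS: "C \<subseteq> S" using C(1) JS by blast
  obtain y where y: "y \<in> (top_of_set J) interior_of C" using int by blast
  have "y \<in> C" using interior_of_subset[of "top_of_set J" C] y by (rule subsetD)
  define D where "D = connected_component_of_set ?X x"
  have xK: "x \<in> K" using x by (simp add: K_def)
  have DC: "D \<in> connected_components_of ?X"
    unfolding D_def using xK by (simp add: connected_component_in_connected_components_of)
  have "finite (connected_components_of ?X)"
    unfolding K_def using finite_components_of_preimage[OF S contR openR fin CS C(2,3) \<open>y \<in> C\<close>] .
  then have "openin ?X D" using DC by (rule open_in_finite_connected_components)
  have "y \<in> R ` D"
    using component_of_preimage_onto[OF S contR openR CS C(2,3) DC[unfolded K_def]] \<open>y \<in> C\<close> by simp
  then obtain z where z: "z \<in> D" "R z = y" by blast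
  have "z \<in> (top_of_set J) interior_of D"
    using preimage_interior_point[OF contR JS inv \<open>openin ?X D\<close>[unfolded K_def] z(1)] y z(2) by simp
  then have "(top_of_set J) interior_of D \<noteq> {}" by blast
  moreover have "x \<in> D" unfolding D_def using xK by (simp add: connected_component_of_refl)
  moreover have "D \<subseteq> K" using connected_components_of_subset[OF DC] by simp
  moreover have "compact D"
    using closedin_connected_components_of[OF DC] closedin_compact compact_preimage[OF S contR C(2)]
    unfolding K_def by blast
  moreover have "connected D"
    using connectedin_connected_components_of[OF DC] by (simp add: connectedin_subtopology)
  ultimately show ?thesis using that unfolding K_def by blast
qed

lemma T_closed_preimage:
  fixes R :: "'a::metric_space \<Rightarrow> 'a"
  assumes S: "compact S" and contR: "continuous_on S R"
    and openR: "\<And>U. openin (top_of_set S) U \<Longrightarrow> openin (top_of_set S) (R ` U)"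
    and fin: "\<And>y. finite {z \<in> S. R z = y}"
    and JS: "J \<subseteq> S" and inv: "\<And>z. z \<in> S \<Longrightarrow> z \<in> J \<longleftrightarrow> R z \<in> J"
    and AJ: "A \<subseteq> J" and TA: "T_closed J A"
  shows "T_closed J {x \<in> S. R x \<in> A}"
proof -
  define B where "B = {x \<in> S. R x \<in> A}"
  have "B \<subseteq> J" using inv AJ by (auto simp: B_def)
  then have "B \<subseteq> T_fun J B" by (auto simp: T_fun_def)
  moreover have "x \<in> B" if xT: "x \<in> T_fun J B" for x
  proof (rule ccontr)
    assume "x \<notin> B"
    have "x \<in> S" "R x \<in> J" using xT JS inv by (auto simp: T_fun_def)
    moreover have "R x \<notin> T_fun J A" using TA \<open>x \<notin> B\<close> \<open>x \<in> S\<close> by (simp add: T_closed_def B_def)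
    ultimately obtain C where C: "C \<subseteq> J - A" "R x \<in> C" "compact C" "connected C"
        "(top_of_set J) interior_of C \<noteq> {}"
      unfolding T_fun_def by blast
    have "C \<subseteq> J" using C(1) by blast
    obtain D where D: "x \<in> D" "D \<subseteq> {z \<in> S. R z \<in> C}" "compact D" "connected D"
        "(top_of_set J) interior_of D \<noteq> {}"
      by (rule component_of_preimage_interior[OF S contR openR fin JS inv \<open>C \<subseteq> J\<close> C(3,4,5) \<open>x \<in> S\<close> C(2)])
    have "D \<subseteq> J - B"
    proof
      fix z assume "z \<in> D"
      then have "z \<in> S" "R z \<in> J - A" using D(2) C(1) by auto
      then show "z \<in> J - B" using inv[of z] by (simp add: B_def)
    qed
    then show False using xT D unfolding T_fun_def by blast
  qed
  ultimately show ?thesis unfolding T_closed_def B_def by blast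
qed

section \<open>Normal families and complete invariance of the Fatou set\<close>

lemma normal_fam_sphD:
  fixes f :: "nat \<Rightarrow> complex \<times> real \<Rightarrow> complex \<times> real"
  assumes "normal_fam_sph F U" and "\<forall>k. f k \<in> F"
  shows "\<exists>r h. strict_mono r \<and>
           (\<forall>K. compact K \<and> K \<subseteq> U \<longrightarrow> uniform_limit K (\<lambda>k. f (r k)) h sequentially)"
  using assms(1)[unfolded normal_fam_sph_def, THEN spec[of _ f], THEN mp, OF assms(2)] .

lemma normal_fam_sph_insert:
  assumes F: "normal_fam_sph F U"
  shows "normal_fam_sph (insert g F) U"
  unfolding normal_fam_sph_def
proof (intro allI impI)
  fix f :: "nat \<Rightarrow> complex \<times> real \<Rightarrow> complex \<times> real"
  assume f: "\<forall>k. f k \<in> insert g F"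
  show "\<exists>r h. strict_mono r \<and>
          (\<forall>K. compact K \<and> K \<subseteq> U \<longrightarrow> uniform_limit K (\<lambda>k. f (r k)) h sequentially)"
  proof (cases "finite {k. f k = g}")
    case False
    let ?r = "enumerate {k. f k = g}"
    have "strict_mono ?r" using False by (rule strict_mono_enumerate)
    moreover have "f (?r k) = g" for k using enumerate_in_set[OF False] by simp
    ultimately show ?thesis by (intro exI[of _ ?r] exI[of _ g]) (simp add: uniform_limit_const)
  next
    case True
    then obtain N where N: "\<forall>k\<in>{k. f k = g}. k < N" unfolding finite_nat_set_iff_bounded by blast
    have "f (k + N) \<in> F" for k
    proof -
      have "f (k + N) \<noteq> g"
      proof
        assume "f (k + N) = g"
        then have "k + N < N" using N by blast
        then show False by simp
      qed
      then show ?thesis using f by blast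
    qed
    then have "\<forall>k. f (k + N) \<in> F" by blast
    from normal_fam_sphD[OF F this] obtain r h where r: "strict_mono r"
      and lim: "\<forall>K. compact K \<and> K \<subseteq> U \<longrightarrow> uniform_limit K (\<lambda>k. f (r k + N)) h sequentially"
      by blast
    show ?thesis
    proof (intro exI[of _ "\<lambda>k. r k + N"] exI[of _ h] conjI allI impI)
      show "strict_mono (\<lambda>k. r k + N)" using r by (simp add: strict_mono_def)
      fix K assume "compact K \<and> K \<subseteq> U"
      then show "uniform_limit K (\<lambda>k. f (r k + N)) h sequentially" using lim by simp
    qed
  qed
qed

text \<open>No continuity of \<open>\<sigma>\<close> is needed.\<close>

lemma normal_fam_sph_compose:
  assumes F: "normal_fam_sph F U"
    and cover: "\<And>K. compact K \<Longrightarrow> K \<subseteq> V \<Longrightarrow> \<exists>L. compact L \<and> L \<subseteq> U \<and> \<sigma> ` K \<subseteq> L"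
    and rep: "\<And>g. g \<in> G \<Longrightarrow> \<exists>f\<in>F. \<forall>x\<in>V. g x = f (\<sigma> x)"
  shows "normal_fam_sph G V"
  unfolding normal_fam_sph_def
proof (intro allI impI)
  fix g :: "nat \<Rightarrow> complex \<times> real \<Rightarrow> complex \<times> real"
  assume "\<forall>k. g k \<in> G"
  then have "\<forall>k. \<exists>f. f \<in> F \<and> (\<forall>x\<in>V. g k x = f (\<sigma> x))" using rep by (simp add: Bex_def)
  from choice[OF this] obtain f where "\<forall>k. f k \<in> F \<and> (\<forall>x\<in>V. g k x = f k (\<sigma> x))" ..
  then have f: "\<forall>k. f k \<in> F" and gf: "\<And>k x. x \<in> V \<Longrightarrow> g k x = f k (\<sigma> x)" by simp_all
  from normal_fam_sphD[OF F f] obtain r h where r: "strict_mono r"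
    and lim: "\<forall>L. compact L \<and> L \<subseteq> U \<longrightarrow> uniform_limit L (\<lambda>k. f (r k)) h sequentially"
    by blast
  have "uniform_limit K (\<lambda>k. g (r k)) (h \<circ> \<sigma>) sequentially" if K: "compact K" "K \<subseteq> V" for K
  proof -
    from cover[OF K] obtain L where L: "compact L" "L \<subseteq> U" "\<sigma> ` K \<subseteq> L" by (elim exE conjE)
    have "uniform_limit (\<sigma> ` K) (\<lambda>k. f (r k)) h sequentially"
      using uniform_limit_on_subset[OF lim[rule_format, OF conjI[OF L(1,2)]] L(3)] .
    have KV: "\<And>x. x \<in> K \<Longrightarrow> x \<in> V" using K(2) by blast
    show ?thesis
      unfolding uniform_limit_iff
    proof (intro allI impI)
      fix e :: real assume "e > 0"
      then have "\<forall>\<^sub>F k in sequentially. \<forall>y\<in>\<sigma> ` K. dist (f (r k) y) (h y) < e"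
        using \<open>uniform_limit (\<sigma> ` K) _ h _\<close> unfolding uniform_limit_iff by blast
      then show "\<forall>\<^sub>F k in sequentially. \<forall>x\<in>K. dist (g (r k) x) ((h \<circ> \<sigma>) x) < e"
        by eventually_elim (simp add: gf KV)
    qed
  qed
  then show "\<exists>r h. strict_mono r \<and>
          (\<forall>K. compact K \<and> K \<subseteq> V \<longrightarrow> uniform_limit K (\<lambda>k. g (r k)) h sequentially)"
    using r by (intro exI[of _ r] exI[of _ "h \<circ> \<sigma>"]) blast
qed

definition fatou_of :: "(complex \<times> real \<Rightarrow> complex \<times> real) \<Rightarrow> (complex \<times> real) set" where
  "fatou_of R = {x \<in> riemann_sphere. \<exists>U. openin (top_of_set riemann_sphere) U \<and> x \<in> U \<and>
       normal_fam_sph (range (\<lambda>n. R ^^ n)) U}"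

lemma fatou_set_eq_fatou_of: "fatou_set p q = fatou_of (rat_sph p q)"
  by (simp add: fatou_set_def fatou_of_def)

lemma funpow_Suc_apply: "(R ^^ Suc n) x = (R ^^ n) (R x)"
  by (simp only: funpow_Suc_right o_apply)

lemma range_funpow_eq: "range (\<lambda>n. R ^^ n) = insert id (range (\<lambda>n. R ^^ Suc n))"
  by (subst UNIV_nat_eq) (simp add: image_image)

text \<open>Backward invariance of the Fatou set of a continuous self-map of the sphere: pull the
  normal family of iterates back along \<open>R\<close> and add the identity.\<close>

lemma fatou_of_preimage:
  assumes contR: "continuous_on riemann_sphere R" and RS: "R ` riemann_sphere \<subseteq> riemann_sphere"
    and x: "x \<in> riemann_sphere" and Rx: "R x \<in> fatou_of R"
  shows "x \<in> fatou_of R"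
proof -
  obtain U where U: "openin (top_of_set riemann_sphere) U" "R x \<in> U"
      "normal_fam_sph (range (\<lambda>n. R ^^ n)) U"
    using Rx unfolding fatou_of_def by blast
  define V where "V = riemann_sphere \<inter> R -` U"
  have "normal_fam_sph (range (\<lambda>n. R ^^ Suc n)) V"
  proof (rule normal_fam_sph_compose[OF U(3)])
    fix K assume K: "compact K" "K \<subseteq> V"
    then have "compact (R ` K)"
      by (intro compact_continuous_image continuous_on_subset[OF contR]) (auto simp: V_def)
    moreover have "R ` K \<subseteq> U" using K(2) by (auto simp: V_def)
    ultimately show "\<exists>L. compact L \<and> L \<subseteq> U \<and> R ` K \<subseteq> L" by blast
  next
    fix g assume "g \<in> range (\<lambda>n. R ^^ Suc n)"
    then obtain n where "g = R ^^ Suc n" by blast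
    then have "\<forall>x\<in>V. g x = (R ^^ n) (R x)" by (simp add: funpow_Suc_apply del: funpow.simps)
    then show "\<exists>f\<in>range (\<lambda>n. R ^^ n). \<forall>x\<in>V. g x = f (R x)" by blast
  qed
  then have "normal_fam_sph (range (\<lambda>n. R ^^ n)) V"
    unfolding range_funpow_eq by (rule normal_fam_sph_insert)
  moreover have "openin (top_of_set riemann_sphere) V"
    unfolding V_def using continuous_openin_preimage[OF contR _ U(1)] RS by blast
  moreover have "x \<in> V" using x U(2) by (simp add: V_def)
  ultimately show ?thesis using x unfolding fatou_of_def by blast
qed

text \<open>Forward invariance of the Fatou set of an open self-map of the sphere: on the image of a
  small ball the iterates factor through a (not necessarily continuous) section of \<open>R\<close> with
  values in a compact set.\<close>

lemma fatou_of_image: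
  assumes RS: "R ` riemann_sphere \<subseteq> riemann_sphere"
    and openR: "\<And>U. openin (top_of_set riemann_sphere) U \<Longrightarrow> openin (top_of_set riemann_sphere) (R ` U)"
    and x: "x \<in> riemann_sphere" and Fx: "x \<in> fatou_of R"
  shows "R x \<in> fatou_of R"
proof -
  obtain V where V: "openin (top_of_set riemann_sphere) V" "x \<in> V"
      "normal_fam_sph (range (\<lambda>n. R ^^ n)) V"
    using Fx unfolding fatou_of_def by blast
  obtain r where r: "r > 0" "\<And>x'. x' \<in> riemann_sphere \<Longrightarrow> dist x' x < r \<Longrightarrow> x' \<in> V"
    using V(1,2) unfolding openin_euclidean_subtopology_iff by blast
  define L where "L = riemann_sphere \<inter> cball x (r/2)"
  define W where "W = R ` (riemann_sphere \<inter> ball x (r/2))"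
  define \<sigma> where "\<sigma> y = (SOME z. z \<in> L \<and> R z = y)" for y
  have \<sigma>: "\<sigma> y \<in> L \<and> R (\<sigma> y) = y" if y: "y \<in> W" for y
  proof -
    obtain z where "z \<in> riemann_sphere \<inter> ball x (r/2)" "R z = y" using y unfolding W_def by blast
    then have "\<exists>z. z \<in> L \<and> R z = y" unfolding L_def using ball_subset_cball by blast
    then show ?thesis unfolding \<sigma>_def by (rule someI_ex)
  qed
  have "compact L" unfolding L_def riemann_sphere_def by (simp add: compact_Int_closed)
  have "L \<subseteq> V" using r by (auto simp: L_def dist_commute)
  have "normal_fam_sph (range (\<lambda>n. R ^^ n)) W"
  proof (rule normal_fam_sph_compose[OF V(3), of _ \<sigma>])
    fix K assume "K \<subseteq> W"
    then have "\<sigma> ` K \<subseteq> L" using \<sigma> by blast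
    then show "\<exists>L'. compact L' \<and> L' \<subseteq> V \<and> \<sigma> ` K \<subseteq> L'"
      using \<open>compact L\<close> \<open>L \<subseteq> V\<close> by blast
  next
    fix g assume "g \<in> range (\<lambda>n. R ^^ n)"
    then obtain n where "g = R ^^ n" by blast
    then have "\<forall>y\<in>W. g y = (R ^^ Suc n) (\<sigma> y)" using \<sigma> by (simp add: funpow_Suc_apply del: funpow.simps)
    then show "\<exists>f\<in>range (\<lambda>n. R ^^ n). \<forall>y\<in>W. g y = f (\<sigma> y)" by blast
  qed
  moreover have "openin (top_of_set riemann_sphere) W"
    unfolding W_def by (intro openR) (simp add: openin_open_Int)
  moreover have "R x \<in> W" using x r(1) unfolding W_def by (intro imageI) simp
  moreover have "R x \<in> riemann_sphere" using RS x by blast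
  ultimately show ?thesis unfolding fatou_of_def by blast
qed

lemma fatou_of_invariant:
  assumes contR: "continuous_on riemann_sphere R" and RS: "R ` riemann_sphere \<subseteq> riemann_sphere"
    and openR: "\<And>U. openin (top_of_set riemann_sphere) U \<Longrightarrow> openin (top_of_set riemann_sphere) (R ` U)"
    and x: "x \<in> riemann_sphere"
  shows "x \<in> fatou_of R \<longleftrightarrow> R x \<in> fatou_of R"
  using fatou_of_preimage[OF contR RS x] fatou_of_image[OF RS openR x] by blast

section \<open>Homogeneous coordinates on the Riemann sphere\<close>

text \<open>The point of the sphere with homogeneous coordinates \<open>[a : b]\<close>, i.e. the image of
  \<open>a / b\<close> under stereographic projection (with \<open>[a : 0]\<close> the north pole \<open>(0, 1)\<close>).\<close>

definition proj_pt :: "complex \<Rightarrow> complex \<Rightarrow> complex \<times> real" where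
  "proj_pt a b = (2 * a * cnj b / complex_of_real ((cmod a)\<^sup>2 + (cmod b)\<^sup>2),
                  ((cmod a)\<^sup>2 - (cmod b)\<^sup>2) / ((cmod a)\<^sup>2 + (cmod b)\<^sup>2))"

lemma sum_sq_pos: "a \<noteq> 0 \<or> b \<noteq> 0 \<Longrightarrow> (cmod a)\<^sup>2 + (cmod b)\<^sup>2 > 0"
  by (auto intro: add_pos_nonneg add_nonneg_pos)

lemma proj_pt_in_sphere:
  assumes "a \<noteq> 0 \<or> b \<noteq> 0"
  shows "proj_pt a b \<in> riemann_sphere"
proof -
  define A where "A = (cmod a)\<^sup>2"
  define B where "B = (cmod b)\<^sup>2"
  have AB: "A + B > 0" using sum_sq_pos[OF assms] by (simp add: A_def B_def)
  have "cmod (complex_of_real (A + B)) = A + B" using AB by (simp only: norm_of_real)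
  then have "(cmod (2 * a * cnj b / complex_of_real (A + B)))\<^sup>2 = 4 * A * B / (A + B)\<^sup>2"
    by (simp only: norm_divide norm_mult complex_mod_cnj power_divide)
      (simp add: A_def B_def power_mult_distrib)
  moreover have "4 * A * B / (A + B)\<^sup>2 + ((A - B) / (A + B))\<^sup>2 = 1"
  proof -
    have "4 * A * B + (A - B)\<^sup>2 = (A + B)\<^sup>2" by (simp add: power2_eq_square algebra_simps)
    then show ?thesis using AB by (simp add: power_divide add_divide_distrib[symmetric])
  qed
  ultimately show ?thesis
    unfolding riemann_sphere_def proj_pt_def A_def B_def by (simp add: norm_Pair power_divide power2_abs)
qed

lemma proj_pt_scale:
  assumes "c \<noteq> 0"
  shows "proj_pt (c * a) (c * b) = proj_pt a b"
proof -
  define C where "C = (cmod c)\<^sup>2"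
  have C: "C > 0" and C': "complex_of_real C \<noteq> 0" using assms by (simp_all add: C_def)
  have e1: "(cmod (c * a))\<^sup>2 + (cmod (c * b))\<^sup>2 = C * ((cmod a)\<^sup>2 + (cmod b)\<^sup>2)"
    and e2: "(cmod (c * a))\<^sup>2 - (cmod (c * b))\<^sup>2 = C * ((cmod a)\<^sup>2 - (cmod b)\<^sup>2)"
    by (simp_all add: norm_mult C_def algebra_simps)
  have e3: "2 * (c * a) * cnj (c * b) = complex_of_real C * (2 * a * cnj b)"
    using complex_norm_square[of c] by (simp add: C_def algebra_simps)
  show ?thesis
    unfolding proj_pt_def e1 e2 e3 of_real_mult
    by (simp only: mult_divide_mult_cancel_left[OF C'] mult_divide_mult_cancel_left[of C] prod_eq_iff)
      (use C in simp)
qed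

lemma proj_pt_div: "b \<noteq> 0 \<Longrightarrow> proj_pt a b = proj_pt (a / b) 1"
  using proj_pt_scale[of b "a / b" 1] by simp

lemma proj_pt_north: "a \<noteq> 0 \<Longrightarrow> proj_pt a 0 = (0, 1)"
  by (simp add: proj_pt_def)

lemma to_sph_Some: "to_sph (Some w) = proj_pt w 1"
  by (simp add: proj_pt_def to_sph_def add.commute mult.commute)

lemma snd_proj_pt_lt: "snd (proj_pt w 1) < 1"
proof -
  have "1 + (cmod w)\<^sup>2 > 0" by (simp add: add_pos_nonneg)
  then show ?thesis unfolding proj_pt_def by (simp add: divide_less_eq add.commute)
qed

lemma proj_pt_eq_north_iff:
  assumes "a \<noteq> 0 \<or> b \<noteq> 0"
  shows "proj_pt a b = (0, 1) \<longleftrightarrow> b = 0"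
proof (cases "b = 0")
  case True
  then show ?thesis using assms by (simp add: proj_pt_north)
next
  case False
  then show ?thesis using snd_proj_pt_lt[of "a / b"] by (auto simp only: proj_pt_div[OF False] snd_conv)
qed

lemma sphere_eq: "x \<in> riemann_sphere \<Longrightarrow> (cmod (fst x))\<^sup>2 + (snd x)\<^sup>2 = 1"
  unfolding riemann_sphere_def by (cases x) (simp add: norm_Pair)

lemma north_pole_unique: "x \<in> riemann_sphere \<Longrightarrow> snd x = 1 \<Longrightarrow> x = (0, 1)"
  using sphere_eq[of x] by (cases x) simp

definition coord :: "complex \<times> real \<Rightarrow> complex" where
  "coord x = fst x / complex_of_real (1 - snd x)"

lemma coord_proj_pt: "coord (proj_pt w 1) = w"
proof -
  have pos: "(cmod w)\<^sup>2 + 1 > 0" by (simp add: add_nonneg_pos)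
  have "1 - ((cmod w)\<^sup>2 - 1) / ((cmod w)\<^sup>2 + 1) = 2 / ((cmod w)\<^sup>2 + 1)"
    using pos by (simp add: field_simps)
  then show ?thesis unfolding coord_def proj_pt_def using pos
    by (simp add: field_simps del: of_real_add of_real_power)
qed

lemma proj_pt_coord:
  assumes x: "x \<in> riemann_sphere" and s: "snd x \<noteq> 1"
  shows "proj_pt (coord x) 1 = x"
proof -
  define z s where "z = fst x" and "s = snd x"
  have sph: "(cmod z)\<^sup>2 = (1 - s) * (1 + s)"
    using sphere_eq[OF x] by (simp add: z_def s_def algebra_simps power2_eq_square)
  have ne: "1 - s \<noteq> 0" and ne': "complex_of_real (1 - s) \<noteq> 0" using \<open>snd x \<noteq> 1\<close> by (simp_all add: s_def)
  have "proj_pt (coord x) 1 = proj_pt z (complex_of_real (1 - s))"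
    using proj_pt_scale[OF ne', of "coord x" 1] ne' by (simp add: coord_def z_def s_def)
  also have "\<dots> = (z, s)"
  proof -
    have d: "(cmod z)\<^sup>2 + (cmod (complex_of_real (1 - s)))\<^sup>2 = 2 * (1 - s)"
      unfolding sph norm_of_real power2_abs by (simp add: power2_eq_square algebra_simps)
    have "(cmod z)\<^sup>2 - (cmod (complex_of_real (1 - s)))\<^sup>2 = 2 * (1 - s) * s"
      unfolding sph norm_of_real power2_abs by (simp add: power2_eq_square algebra_simps)
    then show ?thesis unfolding proj_pt_def d using ne by (simp add: field_simps)
  qed
  finally show ?thesis by (simp add: z_def s_def)
qed

lemma coord_continuous: "continuous_on {x. snd x \<noteq> 1} coord"
  unfolding coord_def by (intro continuous_intros) auto

text \<open>The isometry of the sphere corresponding to \<open>w \<mapsto> 1 / w\<close>; it exchanges the homogeneous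
  coordinates and the two poles, and reduces everything near the north pole to the finite chart.\<close>

definition flip :: "complex \<times> real \<Rightarrow> complex \<times> real" where
  "flip x = (cnj (fst x), - snd x)"

lemma flip_proj_pt: "flip (proj_pt a b) = proj_pt b a"
  by (simp add: flip_def proj_pt_def add.commute mult.commute mult.left_commute minus_divide_left)

lemma flip_flip [simp]: "flip (flip x) = x"
  by (simp add: flip_def)

lemma flip_in_sphere [simp]: "flip x \<in> riemann_sphere \<longleftrightarrow> x \<in> riemann_sphere"
  by (cases x) (simp add: flip_def riemann_sphere_def norm_Pair)

lemma dist_flip [simp]: "dist (flip x) (flip y) = dist x y"
proof -
  have "dist (cnj a) (cnj b) = dist a b" for a b :: complex
    by (metis complex_cnj_diff complex_mod_cnj dist_norm)
  then show ?thesis by (cases x; cases y) (simp add: flip_def dist_Pair_Pair dist_real_def power2_commute)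
qed

lemma flip_continuous: "continuous_on A flip"
  unfolding flip_def by (intro continuous_intros)

lemma proj_pt_continuous:
  assumes "continuous_on A f" "continuous_on A g" "\<And>u. u \<in> A \<Longrightarrow> f u \<noteq> 0 \<or> g u \<noteq> 0"
  shows "continuous_on A (\<lambda>u. proj_pt (f u) (g u))"
proof -
  have "(cmod (f u))\<^sup>2 + (cmod (g u))\<^sup>2 \<noteq> 0" if "u \<in> A" for u
    using sum_sq_pos[OF assms(3)[OF that]] by (metis order_less_irrefl)
  then show ?thesis unfolding proj_pt_def
    by (intro continuous_intros assms) (auto simp del: of_real_add of_real_power)
qed

section \<open>Local surjectivity of ratios of polynomials\<close>

lemma poly_zero_on_open:
  fixes P :: "complex poly"
  assumes "open S" "S \<noteq> {}" "\<And>u. u \<in> S \<Longrightarrow> poly P u = 0"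
  shows "P = 0"
proof (rule ccontr)
  assume "P \<noteq> 0"
  then have "finite {u. poly P u = 0}" by (rule poly_roots_finite)
  then have "finite S" by (rule finite_subset[rotated]) (use assms(3) in auto)
  then show False using finite_imp_not_open assms(1,2) by blast
qed

text \<open>Open mapping theorem for a nonconstant ratio \<open>P / Q\<close> of polynomials: values near
  \<open>P u0 / Q u0\<close> are attained near \<open>u0\<close>.\<close>

lemma poly_ratio_locally_onto:
  fixes P Q :: "complex poly"
  assumes nc: "\<And>v. P - smult v Q \<noteq> 0" and Q0: "poly Q u0 \<noteq> 0" and e: "e > 0"
  obtains \<delta> where "\<delta> > 0"
    "\<And>v. dist v (poly P u0 / poly Q u0) < \<delta> \<Longrightarrow>
       \<exists>u. dist u u0 < e \<and> poly Q u \<noteq> 0 \<and> poly P u / poly Q u = v"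
proof -
  obtain r0 where r0: "r0 > 0" "\<And>u. dist u0 u < r0 \<Longrightarrow> poly Q u \<noteq> 0"
    using continuous_at_avoid[of u0 "poly Q" 0] Q0 by (auto intro: continuous_intros)
  define r where "r = min r0 e"
  have r: "r > 0" "\<And>u. u \<in> ball u0 r \<Longrightarrow> poly Q u \<noteq> 0 \<and> dist u u0 < e"
    using r0 e by (auto simp: r_def dist_commute)
  define f where "f u = poly P u / poly Q u" for u
  have "f holomorphic_on ball u0 r"
    unfolding f_def using r(2) by (intro holomorphic_intros) auto
  moreover have "\<not> f constant_on ball u0 r"
  proof
    assume "f constant_on ball u0 r"
    then obtain v where "\<And>u. u \<in> ball u0 r \<Longrightarrow> f u = v" by (auto simp: constant_on_def)
    then have "\<And>u. u \<in> ball u0 r \<Longrightarrow> poly (P - smult v Q) u = 0"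
      using r(2) by (auto simp: f_def field_simps)
    then have "P - smult v Q = 0"
      using poly_zero_on_open[of "ball u0 r" "P - smult v Q"] r(1) by simp
    then show False using nc by blast
  qed
  ultimately have "open (f ` ball u0 r)"
    by (intro open_mapping_thm[of f "ball u0 r"]) auto
  moreover have "f u0 \<in> f ` ball u0 r" using r(1) by simp
  ultimately obtain \<delta> where \<delta>: "\<delta> > 0" "ball (f u0) \<delta> \<subseteq> f ` ball u0 r"
    by (meson openE)
  show ?thesis
  proof (rule that[OF \<delta>(1)])
    fix v assume "dist v (poly P u0 / poly Q u0) < \<delta>"
    then have "v \<in> f ` ball u0 r" using \<delta>(2) by (auto simp: f_def dist_commute)
    then obtain u where "u \<in> ball u0 r" "v = f u" by blast
    then show "\<exists>u. dist u u0 < e \<and> poly Q u \<noteq> 0 \<and> poly P u / poly Q u = v"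
      using r(2) unfolding f_def by blast
  qed
qed

lemma proj_pt_locally_onto_finite:
  fixes P Q :: "complex poly"
  assumes nc: "\<And>v. P - smult v Q \<noteq> 0" and Q0: "poly Q u0 \<noteq> 0" and e: "e > 0"
  obtains \<eta> where "\<eta> > 0"
    "\<And>y. y \<in> riemann_sphere \<Longrightarrow> dist y (proj_pt (poly P u0) (poly Q u0)) < \<eta> \<Longrightarrow>
       \<exists>u. dist u u0 < e \<and> y = proj_pt (poly P u) (poly Q u)"
proof -
  define v0 where "v0 = poly P u0 / poly Q u0"
  obtain \<delta> where \<delta>: "\<delta> > 0"
    "\<And>v. dist v v0 < \<delta> \<Longrightarrow> \<exists>u. dist u u0 < e \<and> poly Q u \<noteq> 0 \<and> poly P u / poly Q u = v"
    using poly_ratio_locally_onto[OF nc Q0 e] unfolding v0_def by blast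
  define Y where "Y = {x. snd x \<noteq> 1} \<inter> coord -` ball v0 \<delta>"
  have "open Y"
    unfolding Y_def by (intro continuous_open_preimage coord_continuous open_Collect_neq) (auto intro: continuous_intros)
  moreover have y0: "proj_pt (poly P u0) (poly Q u0) = proj_pt v0 1"
    unfolding v0_def by (rule proj_pt_div[OF Q0])
  moreover have "proj_pt v0 1 \<in> Y"
    using snd_proj_pt_lt[of v0] \<delta>(1) by (simp add: Y_def coord_proj_pt)
  ultimately obtain \<eta> where \<eta>: "\<eta> > 0" "ball (proj_pt v0 1) \<eta> \<subseteq> Y" by (meson openE)
  show ?thesis
  proof (rule that[OF \<eta>(1)])
    fix y assume y: "y \<in> riemann_sphere" "dist y (proj_pt (poly P u0) (poly Q u0)) < \<eta>"
    then have "y \<in> Y" using \<eta>(2) y0 by (auto simp: dist_commute)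
    then have "dist (coord y) v0 < \<delta>" by (simp add: Y_def dist_commute)
    then obtain u where u: "dist u u0 < e" "poly Q u \<noteq> 0" "poly P u / poly Q u = coord y"
      using \<delta>(2) by blast
    have "y = proj_pt (coord y) 1" using proj_pt_coord y(1) \<open>y \<in> Y\<close> by (simp add: Y_def)
    also have "\<dots> = proj_pt (poly P u) (poly Q u)" using proj_pt_div[OF u(2)] u(3) by simp
    finally show "\<exists>u. dist u u0 < e \<and> y = proj_pt (poly P u) (poly Q u)" using u(1) by blast
  qed
qed

text \<open>Local surjectivity of \<open>u \<mapsto> [P u : Q u]\<close> everywhere; near the north pole apply the
  previous lemma to \<open>[Q : P]\<close> and transport by \<open>flip\<close>.\<close>

lemma proj_pt_locally_onto:
  fixes P Q :: "complex poly"
  assumes ncr: "\<not> (poly P u0 = 0 \<and> poly Q u0 = 0)"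
    and nc: "\<And>v. P - smult v Q \<noteq> 0" "\<And>v. Q - smult v P \<noteq> 0" and e: "e > 0"
  obtains \<eta> where "\<eta> > 0"
    "\<And>y. y \<in> riemann_sphere \<Longrightarrow> dist y (proj_pt (poly P u0) (poly Q u0)) < \<eta> \<Longrightarrow>
       \<exists>u. dist u u0 < e \<and> y = proj_pt (poly P u) (poly Q u)"
proof (cases "poly Q u0 = 0")
  case False
  then show ?thesis using proj_pt_locally_onto_finite[OF nc(1) _ e] that by blast
next
  case True
  then have "poly P u0 \<noteq> 0" using ncr by blast
  then obtain \<eta> where \<eta>: "\<eta> > 0"
    "\<And>y. y \<in> riemann_sphere \<Longrightarrow> dist y (proj_pt (poly Q u0) (poly P u0)) < \<eta> \<Longrightarrow>
       \<exists>u. dist u u0 < e \<and> y = proj_pt (poly Q u) (poly P u)"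
    using proj_pt_locally_onto_finite[OF nc(2) _ e] by blast
  show ?thesis
  proof (rule that[OF \<eta>(1)])
    fix y assume y: "y \<in> riemann_sphere" "dist y (proj_pt (poly P u0) (poly Q u0)) < \<eta>"
    then have "flip y \<in> riemann_sphere" "dist (flip y) (proj_pt (poly Q u0) (poly P u0)) < \<eta>"
      using dist_flip[of y "proj_pt (poly P u0) (poly Q u0)"] by (simp_all add: flip_proj_pt)
    then obtain u where "dist u u0 < e" "flip y = proj_pt (poly Q u) (poly P u)" using \<eta>(2) by blast
    then show "\<exists>u. dist u u0 < e \<and> y = proj_pt (poly P u) (poly Q u)"
      by (metis flip_flip flip_proj_pt)
  qed
qed

lemma chart_image_nbhd:
  fixes P Q :: "complex poly" and c :: "complex \<Rightarrow> complex \<times> real"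
  assumes c: "continuous_on UNIV c" "\<And>u. c u \<in> riemann_sphere"
    and Rc: "\<And>u. R (c u) = proj_pt (poly P u) (poly Q u)"
    and ncr: "\<not> (poly P u0 = 0 \<and> poly Q u0 = 0)"
    and nc: "\<And>v. P - smult v Q \<noteq> 0" "\<And>v. Q - smult v P \<noteq> 0"
    and U: "openin (top_of_set riemann_sphere) U" and u0: "c u0 \<in> U"
  shows "\<exists>\<eta>>0. \<forall>y\<in>riemann_sphere. dist y (R (c u0)) < \<eta> \<longrightarrow> y \<in> R ` U"
proof -
  obtain Op where Op: "open Op" "U = riemann_sphere \<inter> Op" using U by (auto simp: openin_open)
  have "open (c -` Op)" using continuous_open_preimage[OF c(1) open_UNIV Op(1)] by simp
  moreover have "u0 \<in> c -` Op" using u0 Op by auto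
  ultimately obtain e where e: "e > 0" "ball u0 e \<subseteq> c -` Op" by (meson openE)
  obtain \<eta> where \<eta>: "\<eta> > 0"
    "\<And>y. y \<in> riemann_sphere \<Longrightarrow> dist y (proj_pt (poly P u0) (poly Q u0)) < \<eta> \<Longrightarrow>
       \<exists>u. dist u u0 < e \<and> y = proj_pt (poly P u) (poly Q u)"
    using proj_pt_locally_onto[OF ncr nc e(1)] by blast
  have "y \<in> R ` U" if y: "y \<in> riemann_sphere" "dist y (R (c u0)) < \<eta>" for y
  proof -
    have "dist y (proj_pt (poly P u0) (poly Q u0)) < \<eta>" using y(2) by (simp only: Rc)
    then obtain u where u: "dist u u0 < e" "y = proj_pt (poly P u) (poly Q u)"
      using \<eta>(2)[OF y(1)] by blast
    then have "c u \<in> U" using e(2) c(2) Op(2) by (auto simp: dist_commute)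
    moreover have "y = R (c u)" using u(2) by (simp only: Rc)
    ultimately show ?thesis by blast
  qed
  then show ?thesis using \<eta>(1) by blast
qed

section \<open>Reversed polynomials and nonconstant ratios\<close>

text \<open>The reversed polynomial \<open>t ^ d * r (1 / t)\<close>, giving the expression of a rational map of
  degree \<open>d\<close> in the chart at infinity.\<close>

definition pad_reflect :: "nat \<Rightarrow> complex poly \<Rightarrow> complex poly" where
  "pad_reflect d r = monom 1 (d - degree r) * reflect_poly r"

lemma poly_pad_reflect:
  assumes "degree r \<le> d" "t \<noteq> 0"
  shows "poly (pad_reflect d r) t = t ^ d * poly r (inverse t)"
proof -
  have "poly (pad_reflect d r) t = t ^ (d - degree r) * (t ^ degree r * poly r (inverse t))"
    using assms(2) by (simp add: pad_reflect_def poly_monom poly_reflect_poly_nz)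
  also have "\<dots> = t ^ d * poly r (inverse t)"
    using assms(1) by (simp add: mult.assoc[symmetric] power_add[symmetric])
  finally show ?thesis .
qed

lemma poly_pad_reflect_0:
  assumes "degree r \<le> d"
  shows "poly (pad_reflect d r) 0 = coeff r d"
proof (cases "degree r = d")
  case True then show ?thesis by (simp add: pad_reflect_def poly_monom)
next
  case False
  then have "degree r < d" using assms by simp
  then show ?thesis by (simp add: pad_reflect_def poly_monom coeff_eq_0 zero_power)
qed

lemma pad_reflect_nonconstant:
  assumes "degree P \<le> d" "degree Q \<le> d" and nc: "P - smult v Q \<noteq> 0"
  shows "pad_reflect d P - smult v (pad_reflect d Q) \<noteq> 0"
proof
  assume "pad_reflect d P - smult v (pad_reflect d Q) = 0"
  then have "poly P u = v * poly Q u" if "u \<noteq> 0" for u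
    using that poly_pad_reflect[OF assms(1), of "inverse u"] poly_pad_reflect[OF assms(2), of "inverse u"]
    by simp
  then have "\<And>u. u \<in> - {0} \<Longrightarrow> poly (P - smult v Q) u = 0" by simp
  moreover have "open (- {0 :: complex})" "- {0 :: complex} \<noteq> {}" by auto
  ultimately have "P - smult v Q = 0" using poly_zero_on_open by blast
  then show False using nc by blast
qed

lemma coprime_nonconstant:
  fixes P Q :: "complex poly"
  assumes "coprime P Q" "0 < degree P \<or> 0 < degree Q"
  shows "P - smult v Q \<noteq> 0"
proof
  assume "P - smult v Q = 0"
  then have PQ: "P = smult v Q" by simp
  then have "Q dvd P" by (simp add: dvd_smult)
  then have "is_unit Q" using coprime_common_divisor[OF assms(1) _ dvd_refl] by blast
  then have "degree Q = 0" by (metis is_unit_iff_degree not_is_unit_0)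
  moreover have "degree P \<le> degree Q" unfolding PQ by (rule degree_smult_le)
  ultimately show False using assms(2) by simp
qed

section \<open>Rational maps acting on the sphere\<close>

context
  fixes p q :: "complex poly"
  assumes rat: "is_rational_fn p q"
begin

lemma denominator_nonzero: "q \<noteq> 0"
  using rat by (simp add: is_rational_fn_def)

lemma no_common_root: "\<not> (poly p w = 0 \<and> poly q w = 0)"
proof
  assume "poly p w = 0 \<and> poly q w = 0"
  then have "[:-w, 1:] dvd p" "[:-w, 1:] dvd q" by (simp_all add: poly_eq_0_iff_dvd)
  then have "is_unit [:-w, 1:]"
    using rat coprime_common_divisor by (auto simp: is_rational_fn_def)
  then show False by (simp add: is_unit_iff_degree)
qed

lemma degree_le_rat_degree: "degree p \<le> rat_degree p q" "degree q \<le> rat_degree p q"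
  by (simp_all add: rat_degree_def)

lemma no_common_root_inf:
  "\<not> (poly (pad_reflect (rat_degree p q) p) t = 0 \<and> poly (pad_reflect (rat_degree p q) q) t = 0)"
proof (cases "t = 0")
  case True
  have "coeff p (rat_degree p q) \<noteq> 0 \<or> coeff q (rat_degree p q) \<noteq> 0"
    using denominator_nonzero by (cases "degree p \<le> degree q") (auto simp: rat_degree_def max_def)
  then show ?thesis using True by (simp add: poly_pad_reflect_0 degree_le_rat_degree)
next
  case False
  then show ?thesis using no_common_root[of "inverse t"]
    by (simp add: poly_pad_reflect degree_le_rat_degree)
qed

lemma rat_sph_chart: "rat_sph p q (proj_pt w 1) = proj_pt (poly p w) (poly q w)"
proof -
  have "from_sph (proj_pt w 1) = Some w"
    using snd_proj_pt_lt[of w] coord_proj_pt[of w] by (simp add: from_sph_def coord_def)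
  moreover have "to_sph (rat_eval p q (Some w)) = proj_pt (poly p w) (poly q w)"
  proof (cases "poly q w = 0")
    case True
    then have "poly p w \<noteq> 0" using no_common_root by blast
    then show ?thesis using True by (simp add: rat_eval_def to_sph_def proj_pt_north)
  next
    case False
    then show ?thesis by (simp add: rat_eval_def to_sph_Some proj_pt_div[OF False])
  qed
  ultimately show ?thesis by (simp add: rat_sph_def)
qed

lemma rat_eval_infinity:
  "to_sph (rat_eval p q None) = proj_pt (coeff p (rat_degree p q)) (coeff q (rat_degree p q))"
proof (cases "degree p > degree q")
  case True
  then have "p \<noteq> 0" by auto
  then show ?thesis using True
    by (simp add: rat_eval_def rat_degree_def to_sph_def proj_pt_north coeff_eq_0)
next
  case False
  have lq: "lead_coeff q \<noteq> 0" using denominator_nonzero by simp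
  have "rat_degree p q = degree q" using False by (simp add: rat_degree_def)
  moreover have "degree p < degree q \<Longrightarrow> coeff p (degree q) = 0" by (simp add: coeff_eq_0)
  ultimately show ?thesis using False lq
    by (auto simp: rat_eval_def to_sph_Some proj_pt_div[OF lq])
qed

lemma rat_sph_chart_inf:
  "rat_sph p q (proj_pt 1 t) =
     proj_pt (poly (pad_reflect (rat_degree p q) p) t) (poly (pad_reflect (rat_degree p q) q) t)"
proof (cases "t = 0")
  case True
  then show ?thesis
    by (simp add: rat_sph_def from_sph_def proj_pt_north rat_eval_infinity poly_pad_reflect_0 degree_le_rat_degree)
next
  case False
  have "rat_sph p q (proj_pt 1 t) = proj_pt (poly p (inverse t)) (poly q (inverse t))"
    using proj_pt_div[OF False, of 1] by (simp add: rat_sph_chart divide_inverse)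
  also have "\<dots> = proj_pt (t ^ rat_degree p q * poly p (inverse t)) (t ^ rat_degree p q * poly q (inverse t))"
    using False by (simp add: proj_pt_scale)
  finally show ?thesis using False by (simp add: poly_pad_reflect degree_le_rat_degree)
qed

lemma rat_sph_in_sphere: "rat_sph p q x \<in> riemann_sphere"
proof (cases "rat_eval p q (from_sph x)")
  case None
  then show ?thesis using proj_pt_in_sphere[of 1 0] by (simp add: rat_sph_def to_sph_def proj_pt_north)
next
  case (Some w)
  then show ?thesis using proj_pt_in_sphere[of w 1] by (simp add: rat_sph_def to_sph_Some)
qed

text \<open>The rational map is continuous on the sphere (glue the two charts).\<close>

lemma rat_sph_continuous: "continuous_on riemann_sphere (rat_sph p q)"
proof -
  let ?A = "riemann_sphere \<inter> {x. snd x \<noteq> 1}" and ?B = "riemann_sphere \<inter> {x. snd x \<noteq> -1}"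
  have AB: "?A \<union> ?B = riemann_sphere" by auto
  have "continuous_on ?A (rat_sph p q)"
  proof (rule continuous_on_eq)
    show "continuous_on ?A (\<lambda>x. proj_pt (poly p (coord x)) (poly q (coord x)))"
      using no_common_root
      by (intro proj_pt_continuous continuous_on_poly continuous_on_subset[OF coord_continuous]) auto
    show "proj_pt (poly p (coord x)) (poly q (coord x)) = rat_sph p q x" if "x \<in> ?A" for x
      using that proj_pt_coord[of x] rat_sph_chart[of "coord x"] by simp
  qed
  moreover have "continuous_on ?B (rat_sph p q)"
  proof (rule continuous_on_eq)
    have "continuous_on ?B (coord \<circ> flip)"
      by (rule continuous_on_compose[OF flip_continuous continuous_on_subset[OF coord_continuous]])
        (auto simp: flip_def)
    then show "continuous_on ?B (\<lambda>x. proj_pt (poly (pad_reflect (rat_degree p q) p) (coord (flip x)))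
                                         (poly (pad_reflect (rat_degree p q) q) (coord (flip x))))"
      using no_common_root_inf by (intro proj_pt_continuous continuous_on_poly) (auto simp: o_def)
    fix x assume x: "x \<in> ?B"
    then have "flip x \<in> riemann_sphere" "snd (flip x) \<noteq> 1" by (simp, simp add: flip_def)
    then have "proj_pt (coord (flip x)) 1 = flip x" by (rule proj_pt_coord)
    then have "proj_pt 1 (coord (flip x)) = x" by (metis flip_flip flip_proj_pt)
    then show "proj_pt (poly (pad_reflect (rat_degree p q) p) (coord (flip x)))
                 (poly (pad_reflect (rat_degree p q) q) (coord (flip x))) = rat_sph p q x"
      using rat_sph_chart_inf[of "coord (flip x)"] by simp
  qed
  moreover have "openin (top_of_set (?A \<union> ?B)) ?A" "openin (top_of_set (?A \<union> ?B)) ?B"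
    unfolding AB by (auto intro!: openin_open_Int open_Collect_neq continuous_intros)
  ultimately show ?thesis using continuous_on_Un_local_open AB by metis
qed

lemma ratio_nonconstant:
  assumes "0 < rat_degree p q"
  shows "p - smult v q \<noteq> 0" "q - smult v p \<noteq> 0"
    "pad_reflect (rat_degree p q) p - smult v (pad_reflect (rat_degree p q) q) \<noteq> 0"
    "pad_reflect (rat_degree p q) q - smult v (pad_reflect (rat_degree p q) p) \<noteq> 0"
proof -
  have cop: "coprime p q" "coprime q p" using rat by (simp_all add: is_rational_fn_def coprime_commute)
  have deg: "0 < degree p \<or> 0 < degree q" using assms by (simp add: rat_degree_def less_max_iff_disj)
  show pq: "p - smult v q \<noteq> 0" using coprime_nonconstant[OF cop(1) deg] .
  show qp: "q - smult v p \<noteq> 0" using coprime_nonconstant[OF cop(2)] deg by blast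
  show "pad_reflect (rat_degree p q) p - smult v (pad_reflect (rat_degree p q) q) \<noteq> 0"
    using pad_reflect_nonconstant[OF degree_le_rat_degree pq] .
  show "pad_reflect (rat_degree p q) q - smult v (pad_reflect (rat_degree p q) p) \<noteq> 0"
    using pad_reflect_nonconstant[OF degree_le_rat_degree(2,1) qp] .
qed

lemma rat_sph_open:
  assumes deg: "0 < rat_degree p q" and U: "openin (top_of_set riemann_sphere) U"
  shows "openin (top_of_set riemann_sphere) (rat_sph p q ` U)"
  unfolding openin_euclidean_subtopology_iff
proof (intro conjI ballI)
  show "rat_sph p q ` U \<subseteq> riemann_sphere" using rat_sph_in_sphere by blast
  fix y assume "y \<in> rat_sph p q ` U"
  then obtain x where x: "x \<in> U" "y = rat_sph p q x" by blast
  have xS: "x \<in> riemann_sphere" using x(1) U openin_imp_subset by blast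
  have charts: "continuous_on UNIV (\<lambda>w. proj_pt w 1)" "continuous_on UNIV (\<lambda>t. proj_pt 1 t)"
    "\<And>w. proj_pt w 1 \<in> riemann_sphere" "\<And>t. proj_pt 1 t \<in> riemann_sphere"
    by (auto intro!: proj_pt_continuous proj_pt_in_sphere continuous_intros)
  show "\<exists>e>0. \<forall>x'\<in>riemann_sphere. dist x' y < e \<longrightarrow> x' \<in> rat_sph p q ` U"
  proof (cases "snd x = 1")
    case False
    then have "x = proj_pt (coord x) 1" using proj_pt_coord xS by simp
    then show ?thesis
      using chart_image_nbhd[OF charts(1,3) rat_sph_chart no_common_root ratio_nonconstant(1,2)[OF deg] U,
          of "coord x"] x by simp
  next
    case True
    then have "x = proj_pt 1 0" using north_pole_unique xS proj_pt_north by simp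
    then show ?thesis
      using chart_image_nbhd[OF charts(2,4) rat_sph_chart_inf no_common_root_inf ratio_nonconstant(3,4)[OF deg] U,
          of 0] x by simp
  qed
qed

lemma rat_sph_finite_fibres:
  assumes deg: "0 < rat_degree p q"
  shows "finite {x \<in> riemann_sphere. rat_sph p q x = y}"
proof -
  let ?W = "{w. proj_pt (poly p w) (poly q w) = y}"
  have north_iff: "proj_pt (poly p w) (poly q w) = (0, 1) \<longleftrightarrow> poly q w = 0" for w
    using no_common_root[of w] by (intro proj_pt_eq_north_iff) blast
  have "finite ?W"
  proof (cases "y = (0, 1)")
    case True
    then have "?W \<subseteq> {w. poly q w = 0}" using north_iff by blast
    then show ?thesis using poly_roots_finite[OF denominator_nonzero] finite_subset by blast
  next
    case False
    have "?W \<subseteq> {w. poly (p - smult (coord y) q) w = 0}"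
    proof
      fix w assume w: "w \<in> ?W"
      then have qw: "poly q w \<noteq> 0" using False north_iff by blast
      then have "y = proj_pt (poly p w / poly q w) 1" using w by (simp add: proj_pt_div[OF qw])
      then have "coord y = poly p w / poly q w" by (simp add: coord_proj_pt)
      then show "w \<in> {w. poly (p - smult (coord y) q) w = 0}" using qw by simp
    qed
    then show ?thesis using poly_roots_finite[OF ratio_nonconstant(1)[OF deg]] finite_subset by blast
  qed
  moreover have "{x \<in> riemann_sphere. rat_sph p q x = y} \<subseteq> insert (0, 1) ((\<lambda>w. proj_pt w 1) ` ?W)"
  proof
    fix x assume x: "x \<in> {x \<in> riemann_sphere. rat_sph p q x = y}"
    show "x \<in> insert (0, 1) ((\<lambda>w. proj_pt w 1) ` ?W)"
    proof (cases "snd x = 1")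
      case True then show ?thesis using north_pole_unique x by blast
    next
      case False
      then have "x = proj_pt (coord x) 1" using proj_pt_coord x by simp
      moreover have "coord x \<in> ?W" using x rat_sph_chart[of "coord x"] calculation by simp
      ultimately show ?thesis by blast
    qed
  qed
  ultimately show ?thesis by (meson finite_imageI finite_insert finite_subset)
qed

end

lemma julia_set_completely_invariant:
  assumes rat: "is_rational_fn p q" and deg: "0 < rat_degree p q" and x: "x \<in> riemann_sphere"
  shows "x \<in> julia_set p q \<longleftrightarrow> rat_sph p q x \<in> julia_set p q"
proof -
  have "x \<in> fatou_of (rat_sph p q) \<longleftrightarrow> rat_sph p q x \<in> fatou_of (rat_sph p q)"
  proof (rule fatou_of_invariant[OF rat_sph_continuous[OF rat] _ _ x])
    show "rat_sph p q ` riemann_sphere \<subseteq> riemann_sphere" using rat_sph_in_sphere[OF rat] by blast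
    show "\<And>U. openin (top_of_set riemann_sphere) U \<Longrightarrow>
            openin (top_of_set riemann_sphere) (rat_sph p q ` U)"
      by (rule rat_sph_open[OF rat deg])
  qed
  moreover have "rat_sph p q x \<in> riemann_sphere" by (rule rat_sph_in_sphere[OF rat])
  ultimately show ?thesis unfolding julia_set_def fatou_set_eq_fatou_of using x by blast
qed

theorem mainTheorem2:
  fixes p q :: "complex poly" and A :: "(complex \<times> real) set"
  assumes "is_rational_fn p q"
    and "rat_degree p q \<ge> 2"
    and "connected (julia_set p q)"
    and "A \<subseteq> julia_set p q" and "A \<noteq> {}"
    and "T_closed (julia_set p q) A"
  shows "T_closed (julia_set p q) {x \<in> riemann_sphere. rat_sph p q x \<in> A}"
proof (rule T_closed_preimage)
  note rat = assms(1)
  have deg: "0 < rat_degree p q" using assms(2) by simp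
  show "compact riemann_sphere" by (simp add: riemann_sphere_def)
  show "continuous_on riemann_sphere (rat_sph p q)" by (rule rat_sph_continuous[OF rat])
  show "\<And>U. openin (top_of_set riemann_sphere) U \<Longrightarrow>
          openin (top_of_set riemann_sphere) (rat_sph p q ` U)"
    by (rule rat_sph_open[OF rat deg])
  show "\<And>y. finite {x \<in> riemann_sphere. rat_sph p q x = y}"
    by (rule rat_sph_finite_fibres[OF rat deg])
  show "julia_set p q \<subseteq> riemann_sphere" by (auto simp: julia_set_def)
  show "\<And>x. x \<in> riemann_sphere \<Longrightarrow> x \<in> julia_set p q \<longleftrightarrow> rat_sph p q x \<in> julia_set p q"
    by (rule julia_set_completely_invariant[OF rat deg])
  show "A \<subseteq> julia_set p q" and "T_closed (julia_set p q) A" by (fact assms(4), fact assms(6))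
qed

end
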